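(* For $r\ge 2$, the friendship graph $F_r=W(3,r)$ admits a weak IASI and its sparing number is $r$.
   Context: The friendship graph $F_r$ is obtained by joining $r$ copies of the cycle $C_3$ at a single common vertex; equivalently it is the windmill graph $W(3,r)$ ($r$ copies of $K_3$ sharing one vertex). Let $\mathbb{N}_0$ be the set of non-negative integers; for $A,B\subseteq\mathbb{N}_0$, $A+B=\{a+b:a\in A,b\in B\}$. An integer additive set-indexer (IASI) of a graph $G$ is an injective map $f:V(G)\to\mathcal{P}(\mathbb{N}_0)$ such that $f^+:E(G)\to\mathcal{P}(\mathbb{N}_0)$, $f^+(uv)=f(u)+f(v)$, is injective. A weak IASI is an IASI with $|f^+(uv)|=\max(|f(u)|,|f(v)|)$ for every edge $uv$. An edge $e$ is mono-indexed if $|f^+(e)|=1$. The sparing number $\varphi(G)$ is the minimum number of mono-indexed edges over all weak IASIs of $G$. *)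

theory Defs
  imports Main
begin

text \<open>Simple graphs: a vertex set V and a set E of edges, each edge a 2-element
set {u,v} with u, v in V.\<close>

definition sumset :: "nat set \<Rightarrow> nat set \<Rightarrow> nat set" where
  "sumset A B = {a + b | a b. a \<in> A \<and> b \<in> B}"

definition edge_set_index :: "('v \<Rightarrow> nat set) \<Rightarrow> 'v set \<Rightarrow> nat set" where
  "edge_set_index f e = {a + b | a b u v. e = {u, v} \<and> u \<noteq> v \<and> a \<in> f u \<and> b \<in> f v}"

text \<open>Integer additive set-indexer. Set-labels are nonempty finite subsets of N0
(the standard convention of the IASI literature, where cardinalities of labels are
natural numbers).\<close>
definition iasi :: "'v set \<Rightarrow> 'v set set \<Rightarrow> ('v \<Rightarrow> nat set) \<Rightarrow> bool" where
  "iasi V E f \<longleftrightarrow>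
     (\<forall>v\<in>V. finite (f v) \<and> f v \<noteq> {}) \<and>
     inj_on f V \<and>
     inj_on (edge_set_index f) E"

definition weak_iasi :: "'v set \<Rightarrow> 'v set set \<Rightarrow> ('v \<Rightarrow> nat set) \<Rightarrow> bool" where
  "weak_iasi V E f \<longleftrightarrow> iasi V E f \<and>
     (\<forall>u v. {u, v} \<in> E \<longrightarrow> u \<noteq> v \<longrightarrow>
        card (sumset (f u) (f v)) = max (card (f u)) (card (f v)))"

definition mono_indexed_edges :: "'v set set \<Rightarrow> ('v \<Rightarrow> nat set) \<Rightarrow> 'v set set" where
  "mono_indexed_edges E f = {e \<in> E. card (edge_set_index f e) = 1}"

definition sparing_number :: "'v set \<Rightarrow> 'v set set \<Rightarrow> nat" where
  "sparing_number V E = (LEAST k. \<exists>f. weak_iasi V E f \<and> card (mono_indexed_edges E f) = k)"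

text \<open>Friendship graph F_r = W(3,r): centre 0, vertices 1..2r, triangles {0, 2i-1, 2i}.\<close>
definition friendship_V :: "nat \<Rightarrow> nat set" where
  "friendship_V r = {0..2*r}"

definition friendship_E :: "nat \<Rightarrow> nat set set" where
  "friendship_E r = {{0, i} | i. 1 \<le> i \<and> i \<le> 2*r} \<union> {{2*i - 1, 2*i} | i. 1 \<le> i \<and> i \<le> r}"

end

theory Submission
  imports Defs
begin

text \<open>In a weak IASI an edge whose two labels both had at least two elements would
have a label sum strictly larger than either label, so every edge has an end with a
singleton label. Hence every triangle has two singleton-labelled vertices, and the edge
joining them is mono-indexed; the \<open>r\<close> triangles of \<open>F\<^sub>r\<close> are edge-disjoint, so
at least \<open>r\<close> edges are mono-indexed. Conversely, labelling the centre and one vertex of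
each triangle by singletons and the other vertex by a two-element set, chosen so that
all labels and label sums are distinct, leaves exactly the \<open>r\<close> spokes to the singleton
rim vertices mono-indexed.\<close>

lemma sumset_commute: "sumset A B = sumset B A"
  unfolding sumset_def by (auto, (metis add.commute)+)

lemma sumset_singleton: "sumset {x} B = (\<lambda>b. x + b) ` B"
  unfolding sumset_def by auto

lemma card_sumset_singleton: "card (sumset {x} B) = card B"
  by (simp add: sumset_singleton card_image)

lemma card_sumset_singleton_max:
  assumes "card A = 1" "1 \<le> card B"
  shows "card (sumset A B) = max (card A) (card B)"
proof -
  obtain x where "A = {x}" using assms(1) by (rule card_1_singletonE)
  with assms show ?thesis by (simp add: card_sumset_singleton)
qed

lemma finite_sumset: "finite A \<Longrightarrow> finite B \<Longrightarrow> finite (sumset A B)"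
proof -
  assume "finite A" "finite B"
  have "sumset A B \<subseteq> (\<lambda>(a, b). a + b) ` (A \<times> B)"
    unfolding sumset_def by auto
  with \<open>finite A\<close> \<open>finite B\<close> show ?thesis
    by (meson finite_SigmaI finite_imageI finite_subset)
qed

lemma card_less_card_sumset:
  assumes A: "finite A" "A \<noteq> {}" and B: "finite B" "2 \<le> card B"
  shows "card A < card (sumset A B)"
proof -
  obtain b b' where b: "b \<in> B" "b' \<in> B" "b < b'"
  proof -
    from B obtain x y where xy: "x \<in> B" "y \<in> B" "x \<noteq> y"
      using card_le_Suc0_iff_eq[of B] by auto
    show ?thesis
    proof (cases "x < y")
      case True
      with xy that show ?thesis by blast
    next
      case False
      with xy that[of y x] show ?thesis by simp
    qed
  qed
  let ?S = "insert (Max A + b') ((\<lambda>a. a + b) ` A)"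
  have "a + b < Max A + b'" if "a \<in> A" for a
    using Max_ge[OF A(1) that] b(3) by linarith
  then have "Max A + b' \<notin> (\<lambda>a. a + b) ` A"
    by force
  then have "card ?S = Suc (card A)"
    using A(1) by (simp add: card_image)
  moreover have "?S \<subseteq> sumset A B"
    unfolding sumset_def using b Max_in[OF A] by blast
  then have "card ?S \<le> card (sumset A B)"
    by (rule card_mono[OF finite_sumset[OF A(1) B(1)]])
  ultimately show ?thesis by simp
qed

lemma edge_set_index_doubleton:
  "u \<noteq> v \<Longrightarrow> edge_set_index f {u, v} = sumset (f u) (f v)"
  unfolding edge_set_index_def sumset_def
  by (auto simp: doubleton_eq_iff) (metis add.commute)

lemma mono_indexed_edgeI:
  assumes "{u, v} \<in> E" "u \<noteq> v" "card (f u) = 1" "card (f v) = 1"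
  shows "{u, v} \<in> mono_indexed_edges E f"
proof -
  obtain x where "f u = {x}" using assms(3) by (rule card_1_singletonE)
  with assms show ?thesis
    unfolding mono_indexed_edges_def
    by (simp add: edge_set_index_doubleton card_sumset_singleton)
qed

lemma weak_iasi_singleton_end:
  assumes f: "weak_iasi V E f" and uv: "{u, v} \<in> E" "u \<noteq> v" "u \<in> V" "v \<in> V"
  shows "card (f u) = 1 \<or> card (f v) = 1"
proof (rule ccontr)
  assume no_singleton: "\<not> (card (f u) = 1 \<or> card (f v) = 1)"
  have "\<forall>w\<in>V. finite (f w) \<and> f w \<noteq> {}"
    using f unfolding weak_iasi_def iasi_def by blast
  with uv(3,4) have fin: "finite (f u)" "f u \<noteq> {}" "finite (f v)" "f v \<noteq> {}"
    by simp_all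
  then have "0 < card (f u)" "0 < card (f v)"
    by (simp_all add: card_gt_0_iff)
  then have "2 \<le> card (f u)" "2 \<le> card (f v)"
    using no_singleton by auto
  then have "card (f u) < card (sumset (f u) (f v))" "card (f v) < card (sumset (f u) (f v))"
    using card_less_card_sumset[OF fin(1,2) fin(3)] card_less_card_sumset[OF fin(3,4) fin(1)]
    by (simp_all only: sumset_commute[of "f v"])
  moreover have "card (sumset (f u) (f v)) = max (card (f u)) (card (f v))"
    using f uv(1,2) unfolding weak_iasi_def by blast
  ultimately show False by linarith
qed

lemma weak_iasi_triangle_mono_indexed:
  assumes f: "weak_iasi V E f"
    and V: "a \<in> V" "b \<in> V" "c \<in> V" and distinct: "a \<noteq> b" "a \<noteq> c" "b \<noteq> c"
    and E: "{a, b} \<in> E" "{a, c} \<in> E" "{b, c} \<in> E"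
  shows "\<exists>e\<in>{{a, b}, {a, c}, {b, c}}. e \<in> mono_indexed_edges E f"
proof -
  have "card (f a) = 1 \<or> card (f b) = 1" "card (f a) = 1 \<or> card (f c) = 1"
    "card (f b) = 1 \<or> card (f c) = 1"
    using weak_iasi_singleton_end[OF f E(1) distinct(1) V(1,2)]
      weak_iasi_singleton_end[OF f E(2) distinct(2) V(1,3)]
      weak_iasi_singleton_end[OF f E(3) distinct(3) V(2,3)] .
  then consider "card (f a) = 1" "card (f b) = 1" | "card (f a) = 1" "card (f c) = 1"
    | "card (f b) = 1" "card (f c) = 1"
    by blast
  then show ?thesis
  proof cases
    case 1
    then show ?thesis using mono_indexed_edgeI[OF E(1) distinct(1)] by simp
  next
    case 2
    then show ?thesis using mono_indexed_edgeI[OF E(2) distinct(2)] by simp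
  next
    case 3
    then show ?thesis using mono_indexed_edgeI[OF E(3) distinct(3)] by simp
  qed
qed

lemma sparing_number_eqI:
  assumes "weak_iasi V E f" "card (mono_indexed_edges E f) = k"
    and "\<And>g. weak_iasi V E g \<Longrightarrow> k \<le> card (mono_indexed_edges E g)"
  shows "sparing_number V E = k"
  unfolding sparing_number_def using assms by (intro Least_equality) blast+

lemma friendship_E_cases:
  assumes "e \<in> friendship_E r"
  obtains (spoke) j where "e = {0, j}" "1 \<le> j" "j \<le> 2 * r"
    | (rim) i where "e = {2 * i - 1, 2 * i}" "1 \<le> i" "i \<le> r"
  using assms unfolding friendship_E_def by blast

lemma finite_friendship_E: "finite (friendship_E r)"
proof -
  have "friendship_E r \<subseteq> (\<lambda>j. {0, j}) ` {1..2 * r} \<union> (\<lambda>i. {2 * i - 1, 2 * i}) ` {1..r}"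
    by (auto elim: friendship_E_cases)
  then show ?thesis by (rule finite_subset) simp
qed

lemma friendship_triangle:
  assumes "1 \<le> i" "i \<le> r"
  shows "{0, 2 * i - 1} \<in> friendship_E r" "{0, 2 * i} \<in> friendship_E r"
    "{2 * i - 1, 2 * i} \<in> friendship_E r"
proof -
  show "{0, 2 * i - 1} \<in> friendship_E r"
    using assms unfolding friendship_E_def by (intro UnI1 CollectI exI[of _ "2 * i - 1"]) auto
  show "{0, 2 * i} \<in> friendship_E r"
    using assms unfolding friendship_E_def by (intro UnI1 CollectI exI[of _ "2 * i"]) auto
  show "{2 * i - 1, 2 * i} \<in> friendship_E r"
    using assms unfolding friendship_E_def by (intro UnI2 CollectI exI[of _ i]) auto
qed

text \<open>Each edge of the \<open>i\<close>-th triangle has largest end \<open>2i - 1\<close> or \<open>2i\<close>, so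
\<open>(Max e + 1) div 2\<close> recovers \<open>i\<close> and separates the triangles.\<close>

lemma friendship_mono_indexed_lower_bound:
  assumes f: "weak_iasi (friendship_V r) (friendship_E r) f"
  shows "r \<le> card (mono_indexed_edges (friendship_E r) f)"
proof -
  let ?M = "mono_indexed_edges (friendship_E r) f"
  let ?triangle = "\<lambda>e::nat set. (Max e + 1) div 2"
  have finite_M: "finite ?M"
    using finite_friendship_E unfolding mono_indexed_edges_def by simp
  have "{1..r} \<subseteq> ?triangle ` ?M"
  proof
    fix i assume i: "i \<in> {1..r}"
    then have V: "0 \<in> friendship_V r" "2 * i - 1 \<in> friendship_V r" "2 * i \<in> friendship_V r"
      and distinct: "0 \<noteq> 2 * i - 1" "0 \<noteq> 2 * i" "2 * i - 1 \<noteq> 2 * i"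
      unfolding friendship_V_def by auto
    from i have E: "{0, 2 * i - 1} \<in> friendship_E r" "{0, 2 * i} \<in> friendship_E r"
      "{2 * i - 1, 2 * i} \<in> friendship_E r"
      using friendship_triangle[of i r] by simp_all
    obtain e where e: "e \<in> {{0, 2 * i - 1}, {0, 2 * i}, {2 * i - 1, 2 * i}}" "e \<in> ?M"
      using weak_iasi_triangle_mono_indexed[OF f V distinct E] by blast
    have "?triangle {0, 2 * i - 1} = i" "?triangle {0, 2 * i} = i" "?triangle {2 * i - 1, 2 * i} = i"
      using i by auto
    with e(1) have "i = ?triangle e" by (elim insertE emptyE) simp_all
    from this e(2) show "i \<in> ?triangle ` ?M" by (rule image_eqI)
  qed
  from card_mono[OF finite_imageI[OF finite_M] this]
  have "r \<le> card (?triangle ` ?M)" by simp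
  also have "\<dots> \<le> card ?M"
    using finite_M by (rule card_image_le)
  finally show ?thesis .
qed

definition friendship_labelling :: "nat \<Rightarrow> nat set" where
  "friendship_labelling v = (if even v \<and> v \<noteq> 0 then {v, v + 1} else {v})"

lemma card_friendship_labelling:
  "card (friendship_labelling v) = (if even v \<and> v \<noteq> 0 then 2 else 1)"
  unfolding friendship_labelling_def by auto

lemma Min_friendship_labelling: "Min (friendship_labelling v) = v"
  unfolding friendship_labelling_def by auto

lemma friendship_labelling_spoke:
  "j \<noteq> 0 \<Longrightarrow> edge_set_index friendship_labelling {0, j} = friendship_labelling j"
  by (simp add: edge_set_index_doubleton friendship_labelling_def sumset_singleton)

lemma friendship_labelling_rim:
  assumes "1 \<le> i"
  shows "edge_set_index friendship_labelling {2 * i - 1, 2 * i} = {4 * i - 1, 4 * i}"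
proof -
  have "friendship_labelling (2 * i - 1) = {2 * i - 1}"
    "friendship_labelling (2 * i) = {2 * i, 2 * i + 1}"
    using assms unfolding friendship_labelling_def by auto
  with assms show ?thesis by (simp add: edge_set_index_doubleton sumset_singleton)
qed

text \<open>Spoke labels are \<open>{j}\<close> with \<open>j\<close> odd or \<open>{j, j + 1}\<close> with \<open>j\<close> even, rim labels
\<open>{4i - 1, 4i}\<close>: only the latter have two elements and an odd minimum.\<close>

definition friendship_edge_of_label :: "nat set \<Rightarrow> nat set" where
  "friendship_edge_of_label S =
     (if card S = 2 \<and> odd (Min S) then {(Min S + 1) div 2 - 1, (Min S + 1) div 2}
      else {0, Min S})"

lemma friendship_edge_of_label_inverse:
  assumes "e \<in> friendship_E r"
  shows "friendship_edge_of_label (edge_set_index friendship_labelling e) = e"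
  using assms
proof (cases rule: friendship_E_cases)
  case (spoke j)
  then show ?thesis
    using friendship_labelling_spoke[of j] card_friendship_labelling[of j]
      Min_friendship_labelling[of j]
    by (auto simp: friendship_edge_of_label_def)
next
  case (rim i)
  have "Min {4 * i - 1, 4 * i} = 4 * i - 1" "card {4 * i - 1, 4 * i} = 2"
    using rim by auto
  moreover have "odd (4 * i - 1)" "(4 * i - 1 + 1) div 2 = 2 * i"
    using rim by presburger+
  moreover have "edge_set_index friendship_labelling e = {4 * i - 1, 4 * i}"
    using rim friendship_labelling_rim by simp
  ultimately show ?thesis
    using rim by (simp add: friendship_edge_of_label_def)
qed

lemma friendship_edge_singleton_end:
  assumes "{u, v} \<in> friendship_E r"
  shows "card (friendship_labelling u) = 1 \<or> card (friendship_labelling v) = 1"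
  using assms
proof (cases rule: friendship_E_cases)
  case (spoke j)
  then show ?thesis by (auto simp: doubleton_eq_iff card_friendship_labelling)
next
  case (rim i)
  then have "odd (2 * i - 1)" by presburger
  with rim show ?thesis by (auto simp: doubleton_eq_iff card_friendship_labelling)
qed

lemma weak_iasi_friendship_labelling:
  "weak_iasi (friendship_V r) (friendship_E r) friendship_labelling"
proof -
  have "inj_on friendship_labelling (friendship_V r)"
    by (rule inj_on_inverseI[where g = Min]) (rule Min_friendship_labelling)
  moreover have "inj_on (edge_set_index friendship_labelling) (friendship_E r)"
    by (rule inj_on_inverseI[where g = friendship_edge_of_label])
      (rule friendship_edge_of_label_inverse)
  moreover have "card (sumset (friendship_labelling u) (friendship_labelling v))
      = max (card (friendship_labelling u)) (card (friendship_labelling v))"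
    if "{u, v} \<in> friendship_E r" for u v
  proof -
    have pos: "1 \<le> card (friendship_labelling w)" for w
      by (simp add: card_friendship_labelling)
    from friendship_edge_singleton_end[OF that] show ?thesis
    proof
      assume "card (friendship_labelling u) = 1"
      then show ?thesis using card_sumset_singleton_max pos by blast
    next
      assume "card (friendship_labelling v) = 1"
      then have "card (sumset (friendship_labelling v) (friendship_labelling u))
          = max (card (friendship_labelling v)) (card (friendship_labelling u))"
        using card_sumset_singleton_max pos by blast
      then show ?thesis by (simp only: sumset_commute max.commute)
    qed
  qed
  ultimately show ?thesis
    unfolding weak_iasi_def iasi_def by (simp add: friendship_labelling_def)
qed

lemma friendship_labelling_mono_indexed:
  "mono_indexed_edges (friendship_E r) friendship_labelling \<subseteq> (\<lambda>i. {0, 2 * i - 1}) ` {1..r}"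
proof
  fix e assume "e \<in> mono_indexed_edges (friendship_E r) friendship_labelling"
  then have e: "e \<in> friendship_E r" "card (edge_set_index friendship_labelling e) = 1"
    unfolding mono_indexed_edges_def by auto
  from e(1) show "e \<in> (\<lambda>i. {0, 2 * i - 1}) ` {1..r}"
  proof (cases rule: friendship_E_cases)
    case (spoke j)
    have "edge_set_index friendship_labelling e = friendship_labelling j"
      unfolding spoke(1) using spoke(2) by (intro friendship_labelling_spoke) simp
    with e(2) have singleton: "card (friendship_labelling j) = 1" by (simp only:)
    have "odd j"
    proof (rule ccontr)
      assume "\<not> odd j"
      with spoke(2) have "card (friendship_labelling j) = 2"
        by (simp add: card_friendship_labelling)
      with singleton show False by simp
    qed
    then obtain i where j: "j = 2 * i + 1" by (rule oddE)
    have "e = {0, 2 * (i + 1) - 1}" using spoke(1) j by simp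
    moreover have "i + 1 \<in> {1..r}" using spoke(3) j by simp
    ultimately show ?thesis by (rule image_eqI)
  next
    case (rim i)
    have "edge_set_index friendship_labelling e = {4 * i - 1, 4 * i}"
      unfolding rim(1) using rim(2) by (rule friendship_labelling_rim)
    moreover have "card {4 * i - 1, 4 * i} = 2" using rim(2) by simp
    ultimately have "(2::nat) = 1" using e(2) by (simp only:)
    then show ?thesis by simp
  qed
qed

lemma card_friendship_labelling_mono_indexed:
  "card (mono_indexed_edges (friendship_E r) friendship_labelling) = r"
proof (rule antisym)
  have "card (mono_indexed_edges (friendship_E r) friendship_labelling)
      \<le> card ((\<lambda>i. {0, 2 * i - 1}) ` {1..r})"
    by (rule card_mono[OF finite_imageI[OF finite_atLeastAtMost] friendship_labelling_mono_indexed])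
  also have "\<dots> \<le> r"
    using card_image_le[of "{1..r}" "\<lambda>i. {0, 2 * i - 1}"] by simp
  finally show "card (mono_indexed_edges (friendship_E r) friendship_labelling) \<le> r" .
  show "r \<le> card (mono_indexed_edges (friendship_E r) friendship_labelling)"
    by (rule friendship_mono_indexed_lower_bound[OF weak_iasi_friendship_labelling])
qed

theorem corollary2p16:
  fixes r :: nat
  assumes "r \<ge> 2"
  shows "(\<exists>f. weak_iasi (friendship_V r) (friendship_E r) f) \<and>
         sparing_number (friendship_V r) (friendship_E r) = r"
  using weak_iasi_friendship_labelling card_friendship_labelling_mono_indexed
    friendship_mono_indexed_lower_bound
  by (blast intro: sparing_number_eqI)

end
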